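(* Let $K$ be an algebraically closed field and let $d,n$ be integers with $1<d<n$, $\gcd(n,d)=1$ and $\operatorname{char}(K)\nmid d$. Let $m>n$ be an integer and $\ell:=m/d$. Let $a,A\in K$ with $A\neq 0$. (a) Suppose $v(x)\in K[x]$ is such that $h(x)=A(x-a)^m+v(x)^d$ has degree $n$. Then $d\mid m$, $\deg(v)=\ell$, the leading coefficient $B$ of $v$ satisfies $B^d=-A$, and $v(x)=B(x-a)^{\ell}+q(x)$ with $q(x)\in K[x]$ a nonzero polynomial of degree $n-m+\ell$. In particular $n-m+\ell\geq 0$, i.e. $n\geq m(1-1/d)$. (b) Assume $d\mid m$ and $n-m+\ell\geq 0$. Let $q(x)\in K[x]$ be any polynomial of degree $n-m+\ell$, choose $B\in K$ with $A=-B^d$, and put $v(x):=Bx^{\ell}+q(x)$. Then $\deg(v)=\ell\geq 2$ and the polynomial $h(x)=Ax^m+v(x)^d$ has degree $n$. *)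

theory Defs
  imports "HOL-Computational_Algebra.Polynomial"
begin

end

theory Submission
  imports Defs
begin

text \<open>Write \<open>h = P + v\<^sup>d\<close> with \<open>P = A (x - a)\<^sup>m\<close>. Since \<open>deg h < m\<close>, the leading terms of \<open>P\<close>
  and \<open>v\<^sup>d\<close> cancel, so \<open>m = d \<ell>\<close> and \<open>v = p + q\<close> with \<open>p = B (x - a)\<^sup>\<ell>\<close>, \<open>p\<^sup>d = -P\<close> and
  \<open>deg q < \<ell>\<close>. Then \<open>h = (p + q)\<^sup>d - p\<^sup>d\<close>, whose leading term is \<open>d p\<^sup>d\<^sup>-\<^sup>1 q\<close> because
  \<open>d \<noteq> 0\<close> in \<open>K\<close>; hence \<open>n = (d - 1) \<ell> + deg q\<close>. The same computation, read backwards,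
  gives part (b).\<close>

lemma coeff_mult_at_degree_bounds:
  fixes f g :: "'a::comm_semiring_1 poly"
  assumes "degree f \<le> i" "degree g \<le> j"
  shows "coeff (f * g) (i + j) = coeff f i * coeff g j"
proof -
  have "coeff (f * g) (i + j) = (\<Sum>k\<le>i+j. coeff f k * coeff g (i + j - k))"
    by (simp add: coeff_mult)
  also have "\<dots> = (\<Sum>k\<in>{i}. coeff f k * coeff g (i + j - k))"
  proof (rule sum.mono_neutral_right)
    show "\<forall>k\<in>{..i + j} - {i}. coeff f k * coeff g (i + j - k) = 0"
    proof
      fix k assume k: "k \<in> {..i + j} - {i}"
      show "coeff f k * coeff g (i + j - k) = 0"
      proof (cases "k < i")
        case True
        then have "coeff g (i + j - k) = 0" using assms(2) by (intro coeff_eq_0) auto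
        then show ?thesis by simp
      next
        case False
        then have "coeff f k = 0" using assms(1) k by (intro coeff_eq_0) auto
        then show ?thesis by simp
      qed
    qed
  qed auto
  finally show ?thesis by simp
qed

lemma power_add_minus_power_leading_coeff:
  fixes p q :: "'a::idom poly"
  assumes "degree q < degree p"
  shows "degree ((p + q) ^ Suc k - p ^ Suc k) \<le> k * degree p + degree q \<and>
    coeff ((p + q) ^ Suc k - p ^ Suc k) (k * degree p + degree q) =
      of_nat (Suc k) * lead_coeff p ^ k * lead_coeff q"
proof (induction k)
  case 0
  then show ?case by simp
next
  case (Suc k)
  define D where "D = (p + q) ^ Suc k - p ^ Suc k"
  have split: "(p + q) ^ Suc (Suc k) - p ^ Suc (Suc k) = (p + q) * D + q * p ^ Suc k"
    unfolding D_def by (simp add: algebra_simps)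
  have p0: "p \<noteq> 0" using assms by auto
  have deg_pq: "degree (p + q) = degree p" and lc_pq: "lead_coeff (p + q) = lead_coeff p"
    using assms by (simp_all add: degree_add_eq_left coeff_eq_0)
  have deg_D: "degree D \<le> k * degree p + degree q"
    and coeff_D: "coeff D (k * degree p + degree q) = of_nat (Suc k) * lead_coeff p ^ k * lead_coeff q"
    using Suc.IH unfolding D_def by simp_all
  have deg_pow: "degree (p ^ Suc k) = Suc k * degree p"
    by (rule degree_power_eq[OF p0])
  have deg_1: "degree ((p + q) * D) \<le> Suc k * degree p + degree q"
    using degree_mult_le[of "p + q" D] deg_D deg_pq by simp
  have deg_2: "degree (q * p ^ Suc k) \<le> Suc k * degree p + degree q"
    using degree_mult_le[of q "p ^ Suc k"] deg_pow by simp
  have coeff_1: "coeff ((p + q) * D) (Suc k * degree p + degree q) =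
      lead_coeff p * (of_nat (Suc k) * lead_coeff p ^ k * lead_coeff q)"
    using coeff_mult_at_degree_bounds[of "p + q" "degree p" D] deg_pq deg_D coeff_D lc_pq
    by (simp add: add.assoc)
  have coeff_2: "coeff (q * p ^ Suc k) (Suc k * degree p + degree q) =
      lead_coeff q * lead_coeff p ^ Suc k"
    using coeff_mult_degree_sum[of q "p ^ Suc k"] deg_pow lead_coeff_power[of p "Suc k"]
    by (simp add: add.commute)
  show ?case
    unfolding split
  proof
    show "degree ((p + q) * D + q * p ^ Suc k) \<le> Suc k * degree p + degree q"
      using deg_1 deg_2 by (rule degree_add_le)
    show "coeff ((p + q) * D + q * p ^ Suc k) (Suc k * degree p + degree q) =
        of_nat (Suc (Suc k)) * lead_coeff p ^ Suc k * lead_coeff q"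
      unfolding coeff_add coeff_1 coeff_2 by (simp add: algebra_simps)
  qed
qed

lemma degree_power_add_minus_power:
  fixes p q :: "'a::idom poly"
  assumes "degree q < degree p" "q \<noteq> 0" "0 < k" "(of_nat k :: 'a) \<noteq> 0"
  shows "degree ((p + q) ^ k - p ^ k) = (k - 1) * degree p + degree q"
proof -
  obtain k' where k: "k = Suc k'" using \<open>0 < k\<close> by (cases k) auto
  note leading = power_add_minus_power_leading_coeff[OF assms(1), of k']
  have "p \<noteq> 0" using assms(1) by auto
  then have "coeff ((p + q) ^ k - p ^ k) (k' * degree p + degree q) \<noteq> 0"
    using leading assms(2,4) k by simp
  then have "k' * degree p + degree q \<le> degree ((p + q) ^ k - p ^ k)"
    by (rule le_degree)
  with leading k show ?thesis by simp
qed

lemma degree_add_less_imp_leading_terms_cancel: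
  fixes f g :: "'a::ab_group_add poly"
  assumes "degree (f + g) < degree f"
  shows "degree g = degree f" "lead_coeff g = - lead_coeff f"
proof -
  show deg: "degree g = degree f"
    using assms degree_add_eq_left[of g f] degree_add_eq_right[of f g]
    by (cases "degree g" "degree f" rule: linorder_cases) auto
  have "coeff (f + g) (degree f) = 0" using assms by (intro coeff_eq_0)
  then show "lead_coeff g = - lead_coeff f"
    using deg by (simp add: eq_neg_iff_add_eq_0 add.commute)
qed

lemma degree_diff_less_if_leading_terms_agree:
  fixes u v :: "'a::ab_group_add poly"
  assumes "degree u = degree v" "lead_coeff u = lead_coeff v" "0 < degree v"
  shows "degree (v - u) < degree v"
proof -
  have "degree (v - u) \<le> degree v" using degree_diff_le_max[of v u] assms(1) by simp
  moreover have "coeff (v - u) (degree v) = 0" using assms(1,2) by simp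
  ultimately show ?thesis
    using assms(3) leading_coeff_0_iff[of "v - u"] by (cases "degree (v - u) = degree v") auto
qed

lemma degree_add_perturbed_root_power:
  fixes P p q :: "'a::idom poly"
  assumes "p ^ d = - P" "degree q < degree p" "q \<noteq> 0" "0 < d" "(of_nat d :: 'a) \<noteq> 0"
  shows "degree (P + (p + q) ^ d) = (d - 1) * degree p + degree q"
proof -
  have "P + (p + q) ^ d = (p + q) ^ d - p ^ d" using assms(1) by simp
  then show ?thesis using degree_power_add_minus_power[OF assms(2-5)] by simp
qed

lemma coeff_linear_power_degree [simp]: "coeff ([:- a, 1:] ^ k) k = (1 :: 'a::idom)"
  using lead_coeff_power[of "[:- a, 1:]" k] by (simp add: degree_linear_power)

lemma linear_power_add_power_cancellation:
  fixes v :: "'a::idom poly"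
  assumes deg_h: "degree (smult A ([:- a, 1:] ^ m) + v ^ d) = n"
    and "n < m" "0 < n" "A \<noteq> 0" "0 < d" "(of_nat d :: 'a) \<noteq> 0"
  shows "m = d * degree v" "lead_coeff v ^ d = - A"
    "\<exists>q. q \<noteq> 0 \<and> v = smult (lead_coeff v) ([:- a, 1:] ^ degree v) + q \<and>
       n = (d - 1) * degree v + degree q"
proof -
  define P where "P = smult A ([:- a, 1:] ^ m)"
  define l B where "l = degree v" and "B = lead_coeff v"
  have deg_P: "degree P = m" and lc_P: "lead_coeff P = A"
    unfolding P_def using \<open>A \<noteq> 0\<close> by (simp_all add: degree_linear_power)
  have "degree (P + v ^ d) < degree P" using deg_h \<open>n < m\<close> deg_P by (simp add: P_def)
  note cancel = degree_add_less_imp_leading_terms_cancel[OF this]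
  have "v \<noteq> 0" using cancel(1) deg_P \<open>n < m\<close> \<open>0 < d\<close> by (auto simp: zero_power)
  then show m: "m = d * l"
    using cancel(1) deg_P degree_power_eq[of v d] by (simp add: l_def)
  show B: "lead_coeff v ^ d = - A"
    using cancel(2) lc_P by (simp add: lead_coeff_power)
  define p where "p = smult B ([:- a, 1:] ^ l)"
  define q where "q = v - p"
  have "B \<noteq> 0" using \<open>v \<noteq> 0\<close> by (simp add: B_def)
  then have deg_p: "degree p = l" and lc_p: "lead_coeff p = B"
    unfolding p_def by (simp_all add: degree_linear_power)
  have "0 < l" using m \<open>0 < n\<close> \<open>n < m\<close> by (cases l) auto
  have deg_q: "degree q < l"
    using degree_diff_less_if_leading_terms_agree[of p v] deg_p lc_p \<open>0 < l\<close>
    by (simp add: q_def l_def B_def)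
  have p_root: "p ^ d = - P"
  proof -
    have "p ^ d = smult (B ^ d) ([:- a, 1:] ^ (l * d))"
      by (simp add: p_def smult_power power_mult)
    also have "\<dots> = - P" using B m by (simp add: B_def P_def mult.commute[of l d])
    finally show ?thesis .
  qed
  have v_pq: "v = p + q" by (simp add: q_def)
  have "q \<noteq> 0"
  proof
    assume "q = 0"
    then have "P + v ^ d = 0" using p_root v_pq by simp
    then show False using deg_h \<open>0 < n\<close> by (simp add: P_def)
  qed
  moreover have "n = (d - 1) * l + degree q"
  proof -
    have "degree (P + (p + q) ^ d) = (d - 1) * l + degree q"
      using degree_add_perturbed_root_power[OF p_root _ \<open>q \<noteq> 0\<close> \<open>0 < d\<close> assms(6)]
        deg_p deg_q by simp
    then show ?thesis using deg_h by (simp add: P_def flip: v_pq)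
  qed
  ultimately show "\<exists>q. q \<noteq> 0 \<and> v = smult (lead_coeff v) ([:- a, 1:] ^ degree v) + q \<and>
      n = (d - 1) * degree v + degree q"
    using v_pq unfolding p_def l_def B_def by blast
qed

lemma degree_monom_add_perturbed_monom_power:
  fixes q :: "'a::idom poly"
  assumes "A = - (B ^ d)" "A \<noteq> 0" "m = d * l" "degree q < l" "q \<noteq> 0"
    "0 < d" "(of_nat d :: 'a) \<noteq> 0"
  shows "degree (monom B l + q) = l"
    "degree (monom A m + (monom B l + q) ^ d) = (d - 1) * l + degree q"
proof -
  have "B \<noteq> 0" using assms(1,2,6) by auto
  then have deg_p: "degree (monom B l) = l" by (simp add: degree_monom_eq)
  then show "degree (monom B l + q) = l"
    using \<open>degree q < l\<close> by (simp add: degree_add_eq_left)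
  have "monom B l ^ d = - monom A m"
    using assms(1,3) by (simp add: monom_power minus_monom mult.commute)
  from degree_add_perturbed_root_power[OF this] assms(4-7) deg_p
  show "degree (monom A m + (monom B l + q) ^ d) = (d - 1) * l + degree q" by simp
qed

lemma int_diff_mult_add_eq_iff:
  fixes d l n k :: nat
  assumes "0 < d"
  shows "int k = int n - int (d * l) + int l \<longleftrightarrow> n = (d - 1) * l + k"
proof -
  have "int ((d - 1) * l) = int (d * l) - int l" using assms by (simp add: of_nat_diff algebra_simps)
  then show ?thesis by linarith
qed

theorem proposition5p3:
  fixes d n m :: nat and a A :: "'a :: alg_closed_field"
  assumes "1 < d" and "d < n" and "coprime n d" and "\<not> CHAR('a) dvd d"
    and "n < m" and "A \<noteq> 0"
  shows
    "(\<forall>v :: 'a poly.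
        degree (smult A ([:-a, 1:] ^ m) + v ^ d) = n \<longrightarrow>
          d dvd m \<and> degree v = m div d \<and> lead_coeff v ^ d = - A \<and>
          (\<exists>q. q \<noteq> 0 \<and> int (degree q) = int n - int m + int (m div d) \<and>
               v = smult (lead_coeff v) ([:-a, 1:] ^ (m div d)) + q) \<and>
          int n - int m + int (m div d) \<ge> 0 \<and>
          real n \<ge> real m * (1 - 1 / real d)) \<and>
    (d dvd m \<and> int n - int m + int (m div d) \<ge> 0 \<longrightarrow>
       (\<forall>(q :: 'a poly) B. q \<noteq> 0 \<and> int (degree q) = int n - int m + int (m div d) \<and> A = - (B ^ d) \<longrightarrow>
          (let v = monom B (m div d) + q in
             degree v = m div d \<and> m div d \<ge> 2 \<and>
             degree (monom A m + v ^ d) = n)))"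
proof -
  have "0 < d" "0 < n" using \<open>1 < d\<close> \<open>d < n\<close> by simp_all
  have char: "(of_nat d :: 'a) \<noteq> 0"
    using \<open>\<not> CHAR('a) dvd d\<close> by (simp add: of_nat_eq_0_iff_char_dvd)
  have part_a: "d dvd m \<and> degree v = m div d \<and> lead_coeff v ^ d = - A \<and>
      (\<exists>q. q \<noteq> 0 \<and> int (degree q) = int n - int m + int (m div d) \<and>
           v = smult (lead_coeff v) ([:-a, 1:] ^ (m div d)) + q) \<and>
      int n - int m + int (m div d) \<ge> 0 \<and> real n \<ge> real m * (1 - 1 / real d)"
    if h: "degree (smult A ([:-a, 1:] ^ m) + v ^ d) = n" for v :: "'a poly"
  proof -
    note shape = linear_power_add_power_cancellation[OF h \<open>n < m\<close> \<open>0 < n\<close> \<open>A \<noteq> 0\<close> \<open>0 < d\<close> char]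
    obtain q where q: "q \<noteq> 0" "v = smult (lead_coeff v) ([:- a, 1:] ^ degree v) + q"
      and n: "n = (d - 1) * degree v + degree q"
      using shape(3) by blast
    have l: "m div d = degree v" using shape(1) \<open>0 < d\<close> by simp
    have "real m * (1 - 1 / real d) = real ((d - 1) * degree v)"
      using shape(1) \<open>0 < d\<close> by (simp add: of_nat_diff field_simps)
    then have "real n \<ge> real m * (1 - 1 / real d)" using n by simp
    moreover have "int (degree q) = int n - int m + int (m div d)"
      using n unfolding l unfolding shape(1) int_diff_mult_add_eq_iff[OF \<open>0 < d\<close>] .
    ultimately show ?thesis using shape(1,2) q l by auto
  qed
  have part_b: "let v = monom B (m div d) + q in
      degree v = m div d \<and> m div d \<ge> 2 \<and> degree (monom A m + v ^ d) = n"
    if "d dvd m" "q \<noteq> 0" and deg_q: "int (degree q) = int n - int m + int (m div d)"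
      and "A = - (B ^ d)" for q :: "'a poly" and B
  proof -
    obtain l where m: "m = d * l" using \<open>d dvd m\<close> by blast
    then have l: "m div d = l" using \<open>0 < d\<close> by simp
    have "degree q < l" using deg_q \<open>n < m\<close> l by simp
    have "d * 1 < d * l" using m \<open>d < n\<close> \<open>n < m\<close> by linarith
    then have "2 \<le> l" by simp
    have "n = (d - 1) * l + degree q"
      using deg_q unfolding l unfolding m int_diff_mult_add_eq_iff[OF \<open>0 < d\<close>] .
    with degree_monom_add_perturbed_monom_power[OF \<open>A = - (B ^ d)\<close> \<open>A \<noteq> 0\<close> m
        \<open>degree q < l\<close> \<open>q \<noteq> 0\<close> \<open>0 < d\<close> char] \<open>2 \<le> l\<close> l
    show ?thesis by (simp add: Let_def)
  qed
  show ?thesis using part_a part_b by blast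
qed

end
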